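(* Let $K_0,\dots,K_n$ be strictly concave kernel functions and let $S=S_\sigma$ be a simplex. Then for each $i=0,1,\dots,n$ the function $m_i:S\to\mathbb{R}$ is strictly concave. Consequently $\underline{m}=\min_{j=0,\dots,n}m_j:S\to[-\infty,\infty)$ is strictly concave.
   Context: Identify the torus $\mathbb{T}=\mathbb{R}/2\pi\mathbb{Z}$ with $[0,2\pi)$. A concave kernel function is a $2\pi$-periodic function $K:\mathbb{R}\to[-\infty,\infty)$ which is real-valued and concave on $(0,2\pi)$ with $\lim_{t\downarrow0}K(t)=\lim_{t\uparrow2\pi}K(t)$ existing in $[-\infty,\infty)$; strictly concave if strictly concave on $(0,2\pi)$. For $\mathbf{y}\in\mathbb{T}^n$, $y_0=0$, $y_{n+1}=2\pi$, $F(\mathbf{y},t)=K_0(t)+\sum_{j=1}^nK_j(t-y_j)$. For a permutation $\sigma$ of $\{1,\dots,n\}$ ($\sigma(0)=0,\sigma(n+1)=n+1$), the simplex is $S_\sigma=\{\mathbf{y}:0<y_{\sigma(1)}<\dots<y_{\sigma(n)}<2\pi\}$ (a convex open set when represented in $(0,2\pi)^n$), and for $\mathbf{y}\in S_\sigma$, $m_{\sigma(k)}(\mathbf{y})=\sup_{t\in[y_{\sigma(k)},y_{\sigma(k+1)}]}F(\mathbf{y},t)$, $k=0,\dots,n$. *)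

theory Defs
  imports "HOL-Analysis.Analysis" "HOL-Combinatorics.Permutations"
begin

definition strictly_concave_real :: "real set \<Rightarrow> (real \<Rightarrow> real) \<Rightarrow> bool" where
  "strictly_concave_real S f \<longleftrightarrow>
     (\<forall>x\<in>S. \<forall>y\<in>S. x \<noteq> y \<longrightarrow> (\<forall>u::real. 0 < u \<and> u < 1 \<longrightarrow>
        f (u * x + (1 - u) * y) > u * f x + (1 - u) * f y))"

text \<open>A (strictly concave) kernel function: 2pi-periodic, values in [-inf,inf),
  real valued and strictly concave on (0,2pi), with equal one-sided limits at 0 and 2pi;
  the value at 0 (= 2pi) is taken to be this common limit.\<close>
definition strictly_concave_kernel :: "(real \<Rightarrow> ereal) \<Rightarrow> bool" where
  "strictly_concave_kernel K \<longleftrightarrow>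
     (\<forall>t. K (t + 2 * pi) = K t) \<and>
     (\<forall>t. K t \<noteq> \<infinity>) \<and>
     (\<forall>t\<in>{0<..<2*pi}. K t \<noteq> -\<infinity>) \<and>
     strictly_concave_real {0<..<2*pi} (\<lambda>t. real_of_ereal (K t)) \<and>
     (K \<longlongrightarrow> K 0) (at_right 0) \<and> (K \<longlongrightarrow> K 0) (at_left (2 * pi))"

text \<open>Points y of T^n are represented in (0,2pi)^n as functions nat => real,
  with coordinates 1..n (and value 0 elsewhere). The extended node sequence uses y_0 = 0,
  y_(n+1) = 2pi.\<close>
definition ynode :: "nat \<Rightarrow> (nat \<Rightarrow> real) \<Rightarrow> nat \<Rightarrow> real" where
  "ynode n y j = (if j = 0 then 0 else if j = n + 1 then 2 * pi else y j)"

text \<open>The simplexS S_sigma, sigma a permutation of {1..n} (fixing 0 and n+1).\<close>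
definition simplexS :: "nat \<Rightarrow> (nat \<Rightarrow> nat) \<Rightarrow> (nat \<Rightarrow> real) set" where
  "simplexS n \<sigma> = {y. (\<forall>j. j \<notin> {1..n} \<longrightarrow> y j = 0) \<and>
      (\<forall>k\<le>n. ynode n y (\<sigma> k) < ynode n y (\<sigma> (k + 1)))}"

definition Fsum :: "(nat \<Rightarrow> real \<Rightarrow> ereal) \<Rightarrow> nat \<Rightarrow> (nat \<Rightarrow> real) \<Rightarrow> real \<Rightarrow> ereal" where
  "Fsum K n y t = K 0 t + (\<Sum>j=1..n. K j (t - y j))"

definition mloc :: "(nat \<Rightarrow> real \<Rightarrow> ereal) \<Rightarrow> nat \<Rightarrow> (nat \<Rightarrow> nat) \<Rightarrow> nat \<Rightarrow> (nat \<Rightarrow> real) \<Rightarrow> ereal" where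
  "mloc K n \<sigma> i y =
     (SUP t\<in>{ynode n y i .. ynode n y (\<sigma> (inv \<sigma> i + 1))}. Fsum K n y t)"

definition strictly_concave_pts :: "(nat \<Rightarrow> real) set \<Rightarrow> ((nat \<Rightarrow> real) \<Rightarrow> ereal) \<Rightarrow> bool" where
  "strictly_concave_pts S f \<longleftrightarrow>
     (\<forall>x\<in>S. \<forall>y\<in>S. x \<noteq> y \<longrightarrow> (\<forall>u::real. 0 < u \<and> u < 1 \<longrightarrow>
        f (\<lambda>j. u * x j + (1 - u) * y j) > ereal u * f x + ereal (1 - u) * f y))"

end

theory Submission
  imports Defs
begin

text \<open>On the arc between two consecutive nodes, shifting the arguments of the kernels attached to the
  later nodes by \<open>2\<pi>\<close> turns \<open>F(y, t)\<close> into a sum of kernels evaluated at affine functions of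
  \<open>(y, t)\<close> with values in \<open>[0, 2\<pi>]\<close>. There each kernel, extended by its one-sided limits, is
  concave, and strictly so between distinct points. The arc endpoints depend affinely on \<open>y\<close>, so
  combining maximisers for \<open>y\<close> and \<open>z\<close> gives an admissible point for the combined node vector.
  If \<open>y \<noteq> z\<close> then either the maximisers or some coordinate differ, so at least one kernel
  argument differs and the inequality is strict. Minima of strictly concave functions are strictly
  concave.\<close>

lemma comb_mem_Ioo:
  fixes a b u l r :: real
  assumes "a \<in> {l..r}" "b \<in> {l..r}" "a \<noteq> b" "0 < u" "u < 1"
  shows "u * a + (1 - u) * b \<in> {l<..<r}"
proof -
  have d: "u * a + (1 - u) * b - a = (1 - u) * (b - a)" "b - (u * a + (1 - u) * b) = u * (b - a)"
    by algebra+
  consider "a < b" | "b < a" using assms(3) by linarith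
  then show ?thesis
  proof cases
    case 1
    then have "0 < (1 - u) * (b - a)" "0 < u * (b - a)" using assms(4,5) by simp_all
    then show ?thesis
      using d assms(1,2) unfolding atLeastAtMost_iff greaterThanLessThan_iff by linarith
  next
    case 2
    then have "(1 - u) * (b - a) < 0" "u * (b - a) < 0" using assms(4,5) by (simp_all add: mult_pos_neg)
    then show ?thesis
      using d assms(1,2) unfolding atLeastAtMost_iff greaterThanLessThan_iff by linarith
  qed
qed

lemma strictly_concave_real_imp_concave_on:
  assumes "strictly_concave_real S f" "convex S"
  shows "concave_on S f"
proof (rule concave_on_linorderI[OF _ assms(2)])
  fix t x y :: real
  assume "0 < t" "t < 1" "x \<in> S" "y \<in> S" "x < y"
  moreover have "0 < 1 - t" "1 - t < 1" "x \<noteq> y" using \<open>0 < t\<close> \<open>t < 1\<close> \<open>x < y\<close> by auto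
  ultimately have "(1 - t) * f x + (1 - (1 - t)) * f y < f ((1 - t) * x + (1 - (1 - t)) * y)"
    using assms(1) unfolding strictly_concave_real_def by blast
  then show "(1 - t) * f x + t * f y \<le> f ((1 - t) *\<^sub>R x + t *\<^sub>R y)" by simp
qed

lemma ereal_comb_self:
  fixes x :: ereal
  assumes "x \<noteq> \<infinity>" "0 < u" "u < 1"
  shows "ereal u * x + ereal (1 - u) * x = x"
  using assms by (cases x) (auto simp flip: distrib_right)

lemma sum_MInfty:
  fixes f :: "'a \<Rightarrow> ereal"
  assumes "finite A" "\<And>j. j \<in> A \<Longrightarrow> f j \<noteq> \<infinity>"
  shows "(\<Sum>j\<in>A. f j) = -\<infinity> \<longleftrightarrow> (\<exists>j\<in>A. f j = -\<infinity>)"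
  using assms by (induction A rule: finite_induct) (auto simp: sum_Pinfty)

lemma continuous_on_sum_ereal:
  fixes f :: "'i \<Rightarrow> 'a::topological_space \<Rightarrow> ereal"
  assumes "finite I" "\<And>j. j \<in> I \<Longrightarrow> continuous_on S (f j)"
    "\<And>j x. j \<in> I \<Longrightarrow> x \<in> S \<Longrightarrow> f j x \<noteq> \<infinity>"
  shows "continuous_on S (\<lambda>x. \<Sum>j\<in>I. f j x)"
  using assms
proof (induction I rule: finite_induct)
  case (insert a I)
  have IH: "continuous_on S (\<lambda>x. \<Sum>j\<in>I. f j x)" using insert by simp
  show ?case unfolding continuous_on_def
  proof
    fix x assume x: "x \<in> S"
    have "(\<Sum>j\<in>I. f j x) \<noteq> \<infinity>" using insert.prems(2) x by (auto simp: sum_Pinfty)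
    then have "((\<lambda>x. f a x + (\<Sum>j\<in>I. f j x)) \<longlongrightarrow> f a x + (\<Sum>j\<in>I. f j x)) (at x within S)"
      using insert.prems x IH by (intro tendsto_add_ereal_general) (auto simp: continuous_on_def)
    then show "((\<lambda>x. \<Sum>j\<in>insert a I. f j x) \<longlongrightarrow> (\<Sum>j\<in>insert a I. f j x)) (at x within S)"
      using insert.hyps by simp
  qed
qed simp

lemma ereal_sum_comb_less:
  fixes a b c :: "'i \<Rightarrow> ereal"
  assumes "finite A" and fin: "\<And>j. j \<in> A \<Longrightarrow> \<bar>a j\<bar> \<noteq> \<infinity> \<and> \<bar>b j\<bar> \<noteq> \<infinity>"
    and c: "\<And>j. j \<in> A \<Longrightarrow> c j \<noteq> \<infinity>"
    and le: "\<And>j. j \<in> A \<Longrightarrow> ereal u * a j + ereal v * b j \<le> c j"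
    and less: "j0 \<in> A" "ereal u * a j0 + ereal v * b j0 < c j0"
  shows "ereal u * (\<Sum>j\<in>A. a j) + ereal v * (\<Sum>j\<in>A. b j) < (\<Sum>j\<in>A. c j)"
proof -
  define ra where "ra j = real_of_ereal (a j)" for j
  define rb where "rb j = real_of_ereal (b j)" for j
  define rc where "rc j = real_of_ereal (c j)" for j
  have real: "a j = ereal (ra j) \<and> b j = ereal (rb j) \<and> c j = ereal (rc j)" if j: "j \<in> A" for j
  proof -
    have "ereal u * a j + ereal v * b j \<noteq> -\<infinity>" using fin[OF j] by auto
    then have "\<bar>c j\<bar> \<noteq> \<infinity>" using le[OF j] c[OF j] by auto
    then show ?thesis using fin[OF j] unfolding ra_def rb_def rc_def by (simp add: ereal_real')
  qed
  have "(\<Sum>j\<in>A. u * ra j + v * rb j) < (\<Sum>j\<in>A. rc j)"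
  proof (rule sum_strict_mono_ex1[OF \<open>finite A\<close>])
    show "\<forall>j\<in>A. u * ra j + v * rb j \<le> rc j" using le real by fastforce
    show "\<exists>j\<in>A. u * ra j + v * rb j < rc j" using less real by fastforce
  qed
  moreover have "(\<Sum>j\<in>A. a j) = ereal (\<Sum>j\<in>A. ra j)" "(\<Sum>j\<in>A. b j) = ereal (\<Sum>j\<in>A. rb j)"
    "(\<Sum>j\<in>A. c j) = ereal (\<Sum>j\<in>A. rc j)"
    using real by (simp_all cong: sum.cong)
  ultimately show ?thesis by (simp add: sum.distrib sum_distrib_left)
qed

lemma concave_comb_le_Icc:
  fixes f :: "real \<Rightarrow> ereal"
  assumes cont: "continuous_on {l..r} f" and not_PInf: "\<And>t. t \<in> {l..r} \<Longrightarrow> f t \<noteq> \<infinity>"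
    and concave: "\<And>x y u. x \<in> {l<..<r} \<Longrightarrow> y \<in> {l<..<r} \<Longrightarrow> 0 < u \<Longrightarrow> u < 1 \<Longrightarrow>
        ereal u * f x + ereal (1 - u) * f y \<le> f (u * x + (1 - u) * y)"
    and a: "a \<in> {l..r}" and b: "b \<in> {l..r}" and u: "0 < u" "u < 1"
  shows "ereal u * f a + ereal (1 - u) * f b \<le> f (u * a + (1 - u) * b)"
proof (cases "a = b")
  case True
  then show ?thesis using ereal_comb_self[OF not_PInf[OF a] u] by (simp add: algebra_simps)
next
  case False
  define c where "c = u * a + (1 - u) * b"
  have c: "c \<in> {l<..<r}" unfolding c_def using comb_mem_Ioo[OF a b False u] .
  have "c - a = (1 - u) * (b - a)" "c - b = u * (a - b)" unfolding c_def by algebra+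
  then have "c \<noteq> a" "c \<noteq> b" using False u by auto
  \<comment> \<open>Slide a and b towards the interior point c, where concavity is available, and pass to the limit.\<close>
  define a' where "a' e = (1 - e) * a + (1 - (1 - e)) * c" for e
  define b' where "b' e = (1 - e) * b + (1 - (1 - e)) * c" for e
  have e01: "\<forall>\<^sub>F e in at_right (0::real). 0 < e \<and> e < 1"
    using eventually_at_right_less[of 0] eventually_at_right_real[of 0 1] by (auto elim: eventually_elim2)
  have interior: "\<forall>\<^sub>F e in at_right 0. a' e \<in> {l<..<r} \<and> b' e \<in> {l<..<r}"
    using e01
  proof eventually_elim
    case (elim e)
    then have "0 < 1 - e" "1 - e < 1" by auto
    then show ?case unfolding a'_def b'_def
      using a b c \<open>c \<noteq> a\<close> \<open>c \<noteq> b\<close> by (intro conjI comb_mem_Ioo) auto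
  qed
  have comb: "u * a' e + (1 - u) * b' e = c" for e
    unfolding a'_def b'_def c_def by (simp add: algebra_simps)
  have ineq: "\<forall>\<^sub>F e in at_right 0. ereal u * f (a' e) + ereal (1 - u) * f (b' e) \<le> f c"
    using interior by eventually_elim (metis concave u comb)
  have "(a' \<longlongrightarrow> a) (at_right 0)" "(b' \<longlongrightarrow> b) (at_right 0)"
    unfolding a'_def b'_def by (auto intro!: tendsto_eq_intros)
  then have "((\<lambda>e. f (a' e)) \<longlongrightarrow> f a) (at_right 0)" "((\<lambda>e. f (b' e)) \<longlongrightarrow> f b) (at_right 0)"
    using interior a b
    by (auto intro!: continuous_on_tendsto_compose[OF cont] elim: eventually_mono)
  then have "((\<lambda>e. ereal u * f (a' e) + ereal (1 - u) * f (b' e))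
      \<longlongrightarrow> ereal u * f a + ereal (1 - u) * f b) (at_right 0)"
    using not_PInf[OF a] not_PInf[OF b] u by (intro tendsto_add_ereal_general) auto
  from tendsto_le[OF trivial_limit_at_right_real tendsto_const this ineq] show ?thesis
    unfolding c_def .
qed

lemma concave_comb_less_Icc:
  fixes f :: "real \<Rightarrow> ereal"
  assumes cont: "continuous_on {l..r} f" and not_PInf: "\<And>t. t \<in> {l..r} \<Longrightarrow> f t \<noteq> \<infinity>"
    and strict: "\<And>x y u. x \<in> {l<..<r} \<Longrightarrow> y \<in> {l<..<r} \<Longrightarrow> x \<noteq> y \<Longrightarrow> 0 < u \<Longrightarrow> u < 1 \<Longrightarrow>
        ereal u * f x + ereal (1 - u) * f y < f (u * x + (1 - u) * y)"
    and a: "a \<in> {l..r}" and b: "b \<in> {l..r}" and ab: "a \<noteq> b" and u: "0 < u" "u < 1"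
  shows "ereal u * f a + ereal (1 - u) * f b < f (u * a + (1 - u) * b)"
proof -
  have concave: "ereal v * f x + ereal (1 - v) * f y \<le> f (v * x + (1 - v) * y)"
    if "x \<in> {l..r}" "y \<in> {l..r}" "0 < v" "v < 1" for x y v
  proof (rule concave_comb_le_Icc[OF cont not_PInf _ that])
    fix x y w :: real assume xyw: "x \<in> {l<..<r}" "y \<in> {l<..<r}" "0 < w" "w < 1"
    show "ereal w * f x + ereal (1 - w) * f y \<le> f (w * x + (1 - w) * y)"
    proof (cases "x = y")
      case True
      have "w * x + (1 - w) * x = x" by (simp add: algebra_simps)
      then show ?thesis using True ereal_comb_self[OF not_PInf, of x w] xyw by simp
    qed (use strict[OF xyw(1,2) _ xyw(3,4)] in auto)
  qed
  define c where "c = u * a + (1 - u) * b"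
  have c: "c \<in> {l<..<r}" unfolding c_def using comb_mem_Ioo[OF a b ab u] .
  have "c - a = (1 - u) * (b - a)" "c - b = u * (a - b)" unfolding c_def by algebra+
  then have "a \<noteq> c" "b \<noteq> c" using ab u by auto
  \<comment> \<open>The midpoints a', b' are interior, distinct, and have c as their u-combination, so strictness at c
    comes from the interior.\<close>
  define a' where "a' = 1/2 * a + (1 - 1/2) * c"
  define b' where "b' = 1/2 * b + (1 - 1/2) * c"
  have a': "a' \<in> {l<..<r}" and b': "b' \<in> {l<..<r}"
    unfolding a'_def b'_def using a b c \<open>a \<noteq> c\<close> \<open>b \<noteq> c\<close> by (auto intro!: comb_mem_Ioo)
  have "a' \<noteq> b'" using ab unfolding a'_def b'_def by simp
  moreover have "u * a' + (1 - u) * b' = c" unfolding a'_def b'_def c_def by (simp add: field_simps)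
  ultimately have less_c: "ereal u * f a' + ereal (1 - u) * f b' < f c"
    using strict[OF a' b' _ u] by metis
  have fa': "ereal (1/2) * f a + ereal (1 - 1/2) * f c \<le> f a'"
    unfolding a'_def using a c by (intro concave) auto
  have fb': "ereal (1/2) * f b + ereal (1 - 1/2) * f c \<le> f b'"
    unfolding b'_def using b c by (intro concave) auto
  show ?thesis
  proof (cases "f a = -\<infinity> \<or> f b = -\<infinity>")
    case True
    then have MInf: "ereal u * f a + ereal (1 - u) * f b = -\<infinity>"
      using u not_PInf[OF a] not_PInf[OF b] by (cases "f a"; cases "f b") auto
    show ?thesis unfolding c_def[symmetric] MInf using less_c by auto
  next
    case False
    then obtain A B where A: "f a = ereal A" and B: "f b = ereal B"
      using not_PInf[OF a] not_PInf[OF b] by (cases "f a"; cases "f b") auto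
    obtain C where C: "f c = ereal C"
      using less_c not_PInf[of c] c by (cases "f c") auto
    obtain A' where A': "f a' = ereal A'" using fa' not_PInf[of a'] a' A C by (cases "f a'") auto
    obtain B' where B': "f b' = ereal B'" using fb' not_PInf[of b'] b' B C by (cases "f b'") auto
    have "u * A' + (1 - u) * B' < C" "A / 2 + C / 2 \<le> A'" "B / 2 + C / 2 \<le> B'"
      using less_c fa' fb' unfolding A B C A' B' by simp_all
    then have "u * (A / 2 + C / 2) + (1 - u) * (B / 2 + C / 2) < C"
      using u by (smt (verit) mult_left_mono)
    then have "u * A + (1 - u) * B < C" by (simp add: field_simps)
    then show ?thesis unfolding A B C c_def[symmetric] by simp
  qed
qed

lemma strictly_concave_kernel_periodic:
  "strictly_concave_kernel K \<Longrightarrow> K (t + 2 * pi) = K t"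
  unfolding strictly_concave_kernel_def by blast

lemma strictly_concave_kernel_not_PInf:
  "strictly_concave_kernel K \<Longrightarrow> K t \<noteq> \<infinity>"
  unfolding strictly_concave_kernel_def by blast

lemma strictly_concave_kernel_finite:
  assumes "strictly_concave_kernel K" "t \<in> {0<..<2*pi}"
  shows "K t = ereal (real_of_ereal (K t))"
  using assms unfolding strictly_concave_kernel_def by (cases "K t") auto

lemma strictly_concave_kernel_continuous:
  assumes K: "strictly_concave_kernel K"
  shows "continuous_on {0..2*pi} K"
proof (rule continuous_on_IccI)
  have "concave_on {0<..<2*pi} (\<lambda>t. real_of_ereal (K t))"
    using K unfolding strictly_concave_kernel_def by (auto intro: strictly_concave_real_imp_concave_on)
  then have "continuous_on {0<..<2*pi} (\<lambda>t. - (- real_of_ereal (K t)))"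
    unfolding concave_on_def by (intro continuous_on_minus convex_on_continuous) auto
  then have "continuous_on {0<..<2*pi} (\<lambda>t. ereal (real_of_ereal (K t)))"
    by (auto intro: continuous_on_ereal)
  then have "continuous_on {0<..<2*pi} K"
    by (rule continuous_on_eq) (use strictly_concave_kernel_finite[OF K] in auto)
  then show "(K \<longlongrightarrow> K t) (at t)" if "0 < t" "t < 2*pi" for t
    using that by (simp add: continuous_on_eq_continuous_at isCont_def)
  show "(K \<longlongrightarrow> K 0) (at_right 0)"
    using K unfolding strictly_concave_kernel_def by blast
  show "(K \<longlongrightarrow> K (2*pi)) (at_left (2*pi))"
    using K strictly_concave_kernel_periodic[OF K, of 0] unfolding strictly_concave_kernel_def by simp
qed simp

lemma strictly_concave_kernel_comb_less_interior:
  assumes K: "strictly_concave_kernel K" and xy: "x \<in> {0<..<2*pi}" "y \<in> {0<..<2*pi}" "x \<noteq> y"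
    and u: "0 < u" "u < 1"
  shows "ereal u * K x + ereal (1 - u) * K y < K (u * x + (1 - u) * y)"
proof -
  have "u * x + (1 - u) * y \<in> {0<..<2*pi}" using xy u by (intro comb_mem_Ioo) auto
  moreover have "u * real_of_ereal (K x) + (1 - u) * real_of_ereal (K y)
      < real_of_ereal (K (u * x + (1 - u) * y))"
    using K xy u unfolding strictly_concave_kernel_def strictly_concave_real_def by blast
  ultimately show ?thesis
    using strictly_concave_kernel_finite[OF K] xy by (metis less_ereal.simps(1) plus_ereal.simps(1) times_ereal.simps(1))
qed

lemma strictly_concave_kernel_comb_less:
  assumes K: "strictly_concave_kernel K" and "a \<in> {0..2*pi}" "b \<in> {0..2*pi}" "a \<noteq> b" "0 < u" "u < 1"
  shows "ereal u * K a + ereal (1 - u) * K b < K (u * a + (1 - u) * b)"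
  by (rule concave_comb_less_Icc[OF strictly_concave_kernel_continuous[OF K]
        strictly_concave_kernel_not_PInf[OF K] strictly_concave_kernel_comb_less_interior[OF K] assms(2-)])

lemma strictly_concave_kernel_comb_le:
  assumes K: "strictly_concave_kernel K" and "a \<in> {0..2*pi}" "b \<in> {0..2*pi}" "0 < u" "u < 1"
  shows "ereal u * K a + ereal (1 - u) * K b \<le> K (u * a + (1 - u) * b)"
proof (cases "a = b")
  case True
  have "u * a + (1 - u) * a = a" by (simp add: algebra_simps)
  then show ?thesis using True ereal_comb_self[OF strictly_concave_kernel_not_PInf[OF K]] assms by simp
qed (use strictly_concave_kernel_comb_less[OF assms(1-3) _ assms(4,5)] in auto)

lemma strictly_concave_pts_SUP_Icc:
  fixes \<Phi> :: "(nat \<Rightarrow> real) \<Rightarrow> real \<Rightarrow> ereal" and lo hi :: "(nat \<Rightarrow> real) \<Rightarrow> real"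
  assumes convex: "\<And>y z u. y \<in> S \<Longrightarrow> z \<in> S \<Longrightarrow> 0 < u \<Longrightarrow> u < 1 \<Longrightarrow> (\<lambda>j. u * y j + (1 - u) * z j) \<in> S"
    and lo_comb: "\<And>y z u. lo (\<lambda>j. u * y j + (1 - u) * z j) = u * lo y + (1 - u) * lo z"
    and hi_comb: "\<And>y z u. hi (\<lambda>j. u * y j + (1 - u) * z j) = u * hi y + (1 - u) * hi z"
    and attained: "\<And>y. y \<in> S \<Longrightarrow> \<exists>t\<in>{lo y..hi y}. (SUP s\<in>{lo y..hi y}. \<Phi> y s) = \<Phi> y t \<and> \<Phi> y t \<noteq> -\<infinity>"
    and joint: "\<And>y z s t u. y \<in> S \<Longrightarrow> z \<in> S \<Longrightarrow> y \<noteq> z \<Longrightarrow> s \<in> {lo y..hi y} \<Longrightarrow> t \<in> {lo z..hi z} \<Longrightarrow>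
        \<Phi> y s \<noteq> -\<infinity> \<Longrightarrow> \<Phi> z t \<noteq> -\<infinity> \<Longrightarrow> 0 < u \<Longrightarrow> u < 1 \<Longrightarrow>
        ereal u * \<Phi> y s + ereal (1 - u) * \<Phi> z t < \<Phi> (\<lambda>j. u * y j + (1 - u) * z j) (u * s + (1 - u) * t)"
  shows "strictly_concave_pts S (\<lambda>y. SUP t\<in>{lo y..hi y}. \<Phi> y t)"
  unfolding strictly_concave_pts_def
proof (intro ballI impI allI)
  fix y z :: "nat \<Rightarrow> real" and u :: real
  assume y: "y \<in> S" and z: "z \<in> S" and "y \<noteq> z" and u: "0 < u \<and> u < 1"
  define w where "w = (\<lambda>j. u * y j + (1 - u) * z j)"
  obtain s where s: "s \<in> {lo y..hi y}" "(SUP r\<in>{lo y..hi y}. \<Phi> y r) = \<Phi> y s" "\<Phi> y s \<noteq> -\<infinity>"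
    using attained[OF y] by blast
  obtain t where t: "t \<in> {lo z..hi z}" "(SUP r\<in>{lo z..hi z}. \<Phi> z r) = \<Phi> z t" "\<Phi> z t \<noteq> -\<infinity>"
    using attained[OF z] by blast
  have "u * s + (1 - u) * t \<in> {lo w..hi w}"
    using s(1) t(1) u unfolding w_def lo_comb hi_comb by (auto intro!: add_mono mult_left_mono)
  then have "\<Phi> w (u * s + (1 - u) * t) \<le> (SUP r\<in>{lo w..hi w}. \<Phi> w r)" by (rule SUP_upper)
  moreover have "ereal u * \<Phi> y s + ereal (1 - u) * \<Phi> z t < \<Phi> w (u * s + (1 - u) * t)"
    unfolding w_def using joint y z \<open>y \<noteq> z\<close> s t u by blast
  ultimately show "ereal u * (SUP r\<in>{lo y..hi y}. \<Phi> y r) + ereal (1 - u) * (SUP r\<in>{lo z..hi z}. \<Phi> z r)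
      < (SUP r\<in>{lo (\<lambda>j. u * y j + (1 - u) * z j)..hi (\<lambda>j. u * y j + (1 - u) * z j)}.
           \<Phi> (\<lambda>j. u * y j + (1 - u) * z j) r)"
    unfolding s(2) t(2) w_def by order
qed

lemma strictly_concave_pts_Min:
  assumes "finite I" "I \<noteq> {}" "\<And>i. i \<in> I \<Longrightarrow> strictly_concave_pts S (f i)"
  shows "strictly_concave_pts S (\<lambda>y. Min ((\<lambda>i. f i y) ` I))"
  unfolding strictly_concave_pts_def
proof (intro ballI impI allI)
  fix y z :: "nat \<Rightarrow> real" and u :: real
  assume yz: "y \<in> S" "z \<in> S" "y \<noteq> z" and u: "0 < u \<and> u < 1"
  define w where "w = (\<lambda>j. u * y j + (1 - u) * z j)"
  have "Min ((\<lambda>i. f i w) ` I) \<in> (\<lambda>i. f i w) ` I" using assms(1,2) by (intro Min_in) auto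
  then obtain i where i: "i \<in> I" "Min ((\<lambda>i. f i w) ` I) = f i w" by blast
  have "ereal u * Min ((\<lambda>i. f i y) ` I) + ereal (1 - u) * Min ((\<lambda>i. f i z) ` I)
      \<le> ereal u * f i y + ereal (1 - u) * f i z"
    using assms(1) i(1) u by (intro add_mono ereal_mult_left_mono Min_le) auto
  also have "\<dots> < f i w"
    using assms(3)[OF i(1)] yz u unfolding strictly_concave_pts_def w_def by blast
  finally show "ereal u * Min ((\<lambda>i. f i y) ` I) + ereal (1 - u) * Min ((\<lambda>i. f i z) ` I)
      < Min ((\<lambda>i. f i (\<lambda>j. u * y j + (1 - u) * z j)) ` I)"
    using i(2) unfolding w_def by simp
qed

lemma ynode_comb:
  "ynode n (\<lambda>j. u * y j + (1 - u) * z j) m = u * ynode n y m + (1 - u) * ynode n z m"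
  unfolding ynode_def by (simp add: algebra_simps)

lemma simplexS_comb:
  assumes y: "y \<in> simplexS n \<sigma>" and z: "z \<in> simplexS n \<sigma>" and u: "0 \<le> u" "u \<le> 1"
  shows "(\<lambda>j. u * y j + (1 - u) * z j) \<in> simplexS n \<sigma>"
proof -
  have comb_less: "u * a + (1 - u) * b < u * a' + (1 - u) * b'" if "a < a'" "b < b'" for a a' b b' :: real
  proof -
    have "0 < u * (a' - a) + (1 - u) * (b' - b)"
    proof (cases "u = 0")
      case False
      then show ?thesis using that u by (intro add_pos_nonneg) auto
    qed (use that in simp)
    then show ?thesis by (simp add: algebra_simps)
  qed
  show ?thesis
    using y z unfolding simplexS_def by (auto simp: ynode_comb intro!: comb_less)
qed

lemma simplexS_outside: "y \<in> simplexS n \<sigma> \<Longrightarrow> j \<notin> {1..n} \<Longrightarrow> y j = 0"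
  unfolding simplexS_def by blast

lemma simplexS_ynode_less:
  assumes y: "y \<in> simplexS n \<sigma>" and "k < l" "l \<le> n + 1"
  shows "ynode n y (\<sigma> k) < ynode n y (\<sigma> l)"
  using assms(2,3)
proof (induction l)
  case (Suc l)
  have "ynode n y (\<sigma> l) < ynode n y (\<sigma> (l + 1))" using y Suc.prems unfolding simplexS_def by auto
  then show ?case using Suc by (cases "k = l") auto
qed simp

lemma simplexS_ynode_le:
  "y \<in> simplexS n \<sigma> \<Longrightarrow> k \<le> l \<Longrightarrow> l \<le> n + 1 \<Longrightarrow> ynode n y (\<sigma> k) \<le> ynode n y (\<sigma> l)"
  using simplexS_ynode_less[of y n \<sigma> k l] by (cases "k = l") auto

locale kernel_family =
  fixes K :: "nat \<Rightarrow> real \<Rightarrow> ereal" and n :: nat and \<sigma> :: "nat \<Rightarrow> nat"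
  assumes kernel: "\<And>j. j \<le> n \<Longrightarrow> strictly_concave_kernel (K j)"
    and perm: "\<sigma> permutes {1..n}"
begin

lemma perm_fixes: "\<sigma> 0 = 0" "\<sigma> (n + 1) = n + 1" "inv \<sigma> 0 = 0"
  using permutes_not_in[OF perm] permutes_not_in[OF permutes_inv[OF perm]] by auto

lemma inv_perm_le: "i \<le> n \<Longrightarrow> inv \<sigma> i \<le> n"
  using perm_fixes(3) permutes_in_image[OF permutes_inv[OF perm], of i] by (cases "i = 0") auto

lemma ynode_perm_bounds:
  assumes "y \<in> simplexS n \<sigma>" "k \<le> n + 1"
  shows "0 \<le> ynode n y (\<sigma> k)" "ynode n y (\<sigma> k) \<le> 2 * pi"
proof -
  have "ynode n y (\<sigma> 0) = 0" "ynode n y (\<sigma> (n + 1)) = 2 * pi"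
    unfolding perm_fixes by (simp_all add: ynode_def)
  then show "0 \<le> ynode n y (\<sigma> k)" "ynode n y (\<sigma> k) \<le> 2 * pi"
    using simplexS_ynode_le[OF assms(1), of 0 k] simplexS_ynode_le[OF assms(1), of k "n + 1"] assms(2)
    by simp_all
qed

lemma coord_eq_ynode_perm_inv:
  assumes "j \<in> {1..n}"
  shows "y j = ynode n y (\<sigma> (inv \<sigma> j))" "inv \<sigma> j \<in> {1..n}"
  using assms permutes_inverses(1)[OF perm] permutes_in_image[OF permutes_inv[OF perm]]
  by (auto simp: ynode_def)

text \<open>On the arc from the k-th to the (k+1)-th node in \<open>\<sigma>\<close>-order, shifting \<open>t - y\<^sub>j\<close> by \<open>2\<pi>\<close> for the
  nodes beyond the arc puts every kernel argument into \<open>[0, 2\<pi>]\<close>, where the kernels are concave.\<close>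
definition unwrapped_arg :: "nat \<Rightarrow> (nat \<Rightarrow> real) \<Rightarrow> real \<Rightarrow> nat \<Rightarrow> real" where
  "unwrapped_arg k y t j = t - y j + (if k < inv \<sigma> j then 2 * pi else 0)"

definition unwrapped_F :: "nat \<Rightarrow> (nat \<Rightarrow> real) \<Rightarrow> real \<Rightarrow> ereal" where
  "unwrapped_F k y t = (\<Sum>j\<in>{0..n}. K j (unwrapped_arg k y t j))"

lemma unwrapped_arg_zero: "y \<in> simplexS n \<sigma> \<Longrightarrow> unwrapped_arg k y t 0 = t"
  unfolding unwrapped_arg_def by (simp add: perm_fixes simplexS_outside)

lemma unwrapped_arg_comb:
  "unwrapped_arg k (\<lambda>j. u * y j + (1 - u) * z j) (u * s + (1 - u) * t) j
     = u * unwrapped_arg k y s j + (1 - u) * unwrapped_arg k z t j"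
  unfolding unwrapped_arg_def by (simp add: algebra_simps)

lemma unwrapped_arg_bounds:
  assumes y: "y \<in> simplexS n \<sigma>" and k: "k \<le> n" and j: "j \<le> n"
  shows "t - ynode n y (\<sigma> k) \<le> unwrapped_arg k y t j
    \<and> unwrapped_arg k y t j \<le> t + 2 * pi - ynode n y (\<sigma> (k + 1))"
proof (cases "j = 0")
  case True
  then show ?thesis using ynode_perm_bounds[OF y, of k] ynode_perm_bounds[OF y, of "k + 1"] k
    by (simp add: unwrapped_arg_zero[OF y])
next
  case False
  then have j1: "j \<in> {1..n}" using j by simp
  define l where "l = inv \<sigma> j"
  have yj: "y j = ynode n y (\<sigma> l)" and l: "l \<in> {1..n}"
    using coord_eq_ynode_perm_inv[OF j1] unfolding l_def by auto
  have "0 \<le> y j" "y j \<le> 2 * pi" using ynode_perm_bounds[OF y, of l] l unfolding yj by auto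
  moreover have "0 \<le> ynode n y (\<sigma> k)" "ynode n y (\<sigma> (k + 1)) \<le> 2 * pi"
    using ynode_perm_bounds[OF y, of k] ynode_perm_bounds[OF y, of "k + 1"] k by auto
  moreover have "y j \<le> ynode n y (\<sigma> k)" if "l \<le> k"
    unfolding yj using simplexS_ynode_le[OF y that] k by simp
  moreover have "ynode n y (\<sigma> (k + 1)) \<le> y j" if "k < l"
    unfolding yj using simplexS_ynode_le[OF y, of "k + 1" l] that l by simp
  ultimately show ?thesis unfolding unwrapped_arg_def l_def[symmetric] by auto
qed

lemma unwrapped_arg_Icc:
  "y \<in> simplexS n \<sigma> \<Longrightarrow> k \<le> n \<Longrightarrow> j \<le> n \<Longrightarrow> t \<in> {ynode n y (\<sigma> k)..ynode n y (\<sigma> (k + 1))} \<Longrightarrow>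
    unwrapped_arg k y t j \<in> {0..2 * pi}"
  using unwrapped_arg_bounds[of y k j t] by auto

lemma unwrapped_arg_Ioo:
  "y \<in> simplexS n \<sigma> \<Longrightarrow> k \<le> n \<Longrightarrow> j \<le> n \<Longrightarrow> t \<in> {ynode n y (\<sigma> k)<..<ynode n y (\<sigma> (k + 1))} \<Longrightarrow>
    unwrapped_arg k y t j \<in> {0<..<2 * pi}"
  using unwrapped_arg_bounds[of y k j t] by auto

lemma Fsum_eq_unwrapped_F:
  assumes y: "y \<in> simplexS n \<sigma>"
  shows "Fsum K n y = unwrapped_F k y"
proof
  fix t
  have "K j (t - y j) = K j (unwrapped_arg k y t j)" if "j \<in> {1..n}" for j
    using strictly_concave_kernel_periodic[OF kernel, of j "t - y j"] that
    unfolding unwrapped_arg_def by auto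
  then show "Fsum K n y t = unwrapped_F k y t"
    unfolding Fsum_def unwrapped_F_def sum.atLeast_Suc_atMost[OF le0]
    by (simp add: unwrapped_arg_zero[OF y] atLeastSucAtMost_greaterThanAtMost[symmetric])
qed


lemma unwrapped_F_continuous:
  assumes y: "y \<in> simplexS n \<sigma>" and k: "k \<le> n"
  shows "continuous_on {ynode n y (\<sigma> k)..ynode n y (\<sigma> (k + 1))} (unwrapped_F k y)"
  unfolding unwrapped_F_def
proof (intro continuous_on_sum_ereal)
  fix j assume "j \<in> {0..n}"
  then have j: "j \<le> n" by simp
  show "continuous_on {ynode n y (\<sigma> k)..ynode n y (\<sigma> (k + 1))} (\<lambda>t. K j (unwrapped_arg k y t j))"
    using unwrapped_arg_Icc[OF y k j]
    by (intro continuous_on_compose2[OF strictly_concave_kernel_continuous[OF kernel[OF j]]])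
      (auto simp: unwrapped_arg_def intro!: continuous_intros)
qed (simp_all add: strictly_concave_kernel_not_PInf[OF kernel])

lemma Fsum_attains_SUP:
  assumes y: "y \<in> simplexS n \<sigma>" and k: "k \<le> n"
  defines "I \<equiv> {ynode n y (\<sigma> k)..ynode n y (\<sigma> (k + 1))}"
  shows "\<exists>t\<in>I. (SUP s\<in>I. Fsum K n y s) = Fsum K n y t \<and> \<bar>Fsum K n y t\<bar> \<noteq> \<infinity>"
proof -
  have lo_hi: "ynode n y (\<sigma> k) < ynode n y (\<sigma> (k + 1))"
    using simplexS_ynode_less[OF y, of k "k + 1"] k by simp
  obtain t where t: "t \<in> I" and max: "\<And>s. s \<in> I \<Longrightarrow> unwrapped_F k y s \<le> unwrapped_F k y t"
    using continuous_attains_sup[OF compact_Icc _ unwrapped_F_continuous[OF y k]] lo_hi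
    unfolding I_def by auto
  define m where "m = (ynode n y (\<sigma> k) + ynode n y (\<sigma> (k + 1))) / 2"
  have m: "m \<in> {ynode n y (\<sigma> k)<..<ynode n y (\<sigma> (k + 1))}" using lo_hi unfolding m_def by auto
  have "K j (unwrapped_arg k y m j) \<noteq> -\<infinity>" if "j \<in> {0..n}" for j
    using strictly_concave_kernel_finite[OF kernel unwrapped_arg_Ioo[OF y k _ m]] that
    by (metis MInfty_neq_ereal(1) atLeastAtMost_iff)
  then have "unwrapped_F k y m \<noteq> -\<infinity>"
    unfolding unwrapped_F_def
    using sum_MInfty[of "{0..n}" "\<lambda>j. K j (unwrapped_arg k y m j)"] strictly_concave_kernel_not_PInf[OF kernel]
    by auto
  moreover have "unwrapped_F k y m \<le> unwrapped_F k y t" using max m unfolding I_def by auto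
  moreover have "unwrapped_F k y t \<noteq> \<infinity>"
    unfolding unwrapped_F_def using strictly_concave_kernel_not_PInf[OF kernel] by (simp add: sum_Pinfty)
  moreover have "(SUP s\<in>I. unwrapped_F k y s) = unwrapped_F k y t"
    by (rule antisym) (use t max in \<open>auto intro: SUP_upper SUP_least\<close>)
  ultimately show ?thesis using t unfolding Fsum_eq_unwrapped_F[OF y, of k] by auto
qed


lemma Fsum_strict_joint:
  assumes y: "y \<in> simplexS n \<sigma>" and z: "z \<in> simplexS n \<sigma>" and "y \<noteq> z" and k: "k \<le> n"
    and s: "s \<in> {ynode n y (\<sigma> k)..ynode n y (\<sigma> (k + 1))}"
    and t: "t \<in> {ynode n z (\<sigma> k)..ynode n z (\<sigma> (k + 1))}"
    and fy: "Fsum K n y s \<noteq> -\<infinity>" and fz: "Fsum K n z t \<noteq> -\<infinity>" and u: "0 < u" "u < 1"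
  shows "ereal u * Fsum K n y s + ereal (1 - u) * Fsum K n z t
    < Fsum K n (\<lambda>j. u * y j + (1 - u) * z j) (u * s + (1 - u) * t)"
proof -
  define w where "w = (\<lambda>j. u * y j + (1 - u) * z j)"
  have w: "w \<in> simplexS n \<sigma>" unfolding w_def using simplexS_comb[OF y z] u by simp
  define a where "a j = unwrapped_arg k y s j" for j
  define b where "b j = unwrapped_arg k z t j" for j
  have ab: "a j \<in> {0..2 * pi}" "b j \<in> {0..2 * pi}" if "j \<in> {0..n}" for j
    unfolding a_def b_def using unwrapped_arg_Icc[OF y k _ s] unwrapped_arg_Icc[OF z k _ t] that by auto
  have comb: "unwrapped_arg k w (u * s + (1 - u) * t) j = u * a j + (1 - u) * b j" for j
    unfolding w_def a_def b_def by (rule unwrapped_arg_comb)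
  have not_PInf: "K j x \<noteq> \<infinity>" if "j \<in> {0..n}" for j x
    using strictly_concave_kernel_not_PInf[OF kernel] that by simp
  have "(\<Sum>j\<in>{0..n}. K j (a j)) \<noteq> -\<infinity>" "(\<Sum>j\<in>{0..n}. K j (b j)) \<noteq> -\<infinity>"
    using fy fz unfolding Fsum_eq_unwrapped_F[OF y, of k] Fsum_eq_unwrapped_F[OF z, of k]
      unwrapped_F_def a_def b_def by simp_all
  then have fin: "\<bar>K j (a j)\<bar> \<noteq> \<infinity> \<and> \<bar>K j (b j)\<bar> \<noteq> \<infinity>" if "j \<in> {0..n}" for j
    using sum_MInfty[of "{0..n}" "\<lambda>j. K j (a j)"] sum_MInfty[of "{0..n}" "\<lambda>j. K j (b j)"]
      not_PInf that by auto
  obtain j0 where j0: "j0 \<in> {0..n}" "a j0 \<noteq> b j0"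
  proof (cases "s = t")
    case True
    obtain j where "y j \<noteq> z j" using \<open>y \<noteq> z\<close> by auto
    moreover from this have "j \<in> {1..n}" using simplexS_outside[OF y] simplexS_outside[OF z] by metis
    ultimately show ?thesis using that[of j] True by (auto simp: a_def b_def unwrapped_arg_def)
  next
    case False
    then show ?thesis
      using that[of 0] by (simp add: a_def b_def unwrapped_arg_zero[OF y] unwrapped_arg_zero[OF z])
  qed
  have "ereal u * (\<Sum>j\<in>{0..n}. K j (a j)) + ereal (1 - u) * (\<Sum>j\<in>{0..n}. K j (b j))
      < (\<Sum>j\<in>{0..n}. K j (u * a j + (1 - u) * b j))"
  proof (rule ereal_sum_comb_less[OF _ fin not_PInf _ j0(1)])
    show "ereal u * K j (a j) + ereal (1 - u) * K j (b j) \<le> K j (u * a j + (1 - u) * b j)"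
      if "j \<in> {0..n}" for j
      using strictly_concave_kernel_comb_le[OF kernel ab[OF that] u] that by simp
    show "ereal u * K j0 (a j0) + ereal (1 - u) * K j0 (b j0) < K j0 (u * a j0 + (1 - u) * b j0)"
      using strictly_concave_kernel_comb_less[OF kernel ab[OF j0(1)] j0(2) u] j0(1) by simp
  qed simp
  then show ?thesis
    unfolding Fsum_eq_unwrapped_F[OF y, of k] Fsum_eq_unwrapped_F[OF z, of k]
      Fsum_eq_unwrapped_F[OF w, of k, unfolded w_def] unwrapped_F_def comb[unfolded w_def]
    by (simp add: a_def b_def)
qed

lemma mloc_finite_strictly_concave:
  assumes k: "k \<le> n"
  shows "(\<forall>y\<in>simplexS n \<sigma>. \<bar>mloc K n \<sigma> (\<sigma> k) y\<bar> \<noteq> \<infinity>)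
    \<and> strictly_concave_pts (simplexS n \<sigma>) (mloc K n \<sigma> (\<sigma> k))"
proof
  have mloc: "mloc K n \<sigma> (\<sigma> k) = (\<lambda>y. SUP t\<in>{ynode n y (\<sigma> k)..ynode n y (\<sigma> (k + 1))}. Fsum K n y t)"
    unfolding mloc_def by (simp add: permutes_inverses(2)[OF perm])
  show "\<forall>y\<in>simplexS n \<sigma>. \<bar>mloc K n \<sigma> (\<sigma> k) y\<bar> \<noteq> \<infinity>"
    unfolding mloc using Fsum_attains_SUP[OF _ k] by force
  show "strictly_concave_pts (simplexS n \<sigma>) (mloc K n \<sigma> (\<sigma> k))"
    unfolding mloc
  proof (rule strictly_concave_pts_SUP_Icc)
    show "\<exists>t\<in>{ynode n y (\<sigma> k)..ynode n y (\<sigma> (k + 1))}.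
        (SUP s\<in>{ynode n y (\<sigma> k)..ynode n y (\<sigma> (k + 1))}. Fsum K n y s) = Fsum K n y t \<and> Fsum K n y t \<noteq> -\<infinity>"
      if "y \<in> simplexS n \<sigma>" for y
      using Fsum_attains_SUP[OF that k] by force
  qed (auto simp: ynode_comb intro: simplexS_comb Fsum_strict_joint[OF _ _ _ k])
qed

end

theorem proposition7p2:
  fixes K :: "nat \<Rightarrow> real \<Rightarrow> ereal" and n :: nat and \<sigma> :: "nat \<Rightarrow> nat"
  assumes kern: "\<And>j. j \<le> n \<Longrightarrow> strictly_concave_kernel (K j)"
    and perm: "\<sigma> permutes {1..n}"
  shows "(\<forall>i\<le>n. (\<forall>y\<in>simplexS n \<sigma>. \<bar>mloc K n \<sigma> i y\<bar> \<noteq> \<infinity>)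
                \<and> strictly_concave_pts (simplexS n \<sigma>) (mloc K n \<sigma> i))
         \<and> strictly_concave_pts (simplexS n \<sigma>) (\<lambda>y. Min ((\<lambda>j. mloc K n \<sigma> j y) ` {0..n}))"
proof -
  interpret kernel_family K n \<sigma> using kern perm by unfold_locales
  have mloc: "(\<forall>y\<in>simplexS n \<sigma>. \<bar>mloc K n \<sigma> i y\<bar> \<noteq> \<infinity>) \<and> strictly_concave_pts (simplexS n \<sigma>) (mloc K n \<sigma> i)"
    if "i \<le> n" for i
    using mloc_finite_strictly_concave[OF inv_perm_le[OF that]] permutes_inverses(1)[OF perm] by simp
  then show ?thesis using strictly_concave_pts_Min[of "{0..n}"] by auto
qed

end
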